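(* Let $q\in(0,1)$, let $\lambda,\mu\in\mathbb C$ with $\lambda\ne q$, and let $t\in\mathbb{Z}_{\ge0}$. Then, as an identity of rational functions of $w_1,\dots,w_t$, $$\frac{q-\lambda q^t}{q-\lambda}+\sum_{i=0}^{t-1}T_{\sigma^-_{[1,i+1]}}\frac{(q-1)(\lambda-q\mu w_1)}{(q-\lambda)(1-\mu w_1)}=\prod_{i=1}^t\frac{1-q\mu w_i}{1-\mu w_i}.$$
   Context: $\sigma_i$ is the transposition of $i,i+1$; $\sigma^-_{[1,b]}=\sigma_{b-1}\sigma_{b-2}\cdots\sigma_1$ ($=\mathrm{id}$ for $b=1$). Operators on rational functions: $t_i$ swaps $w_i,w_{i+1}$; $T_i=q+\frac{w_{i+1}-qw_i}{w_{i+1}-w_i}(t_i-1)$; $T_{\sigma^-_{[1,b]}}=T_{b-1}T_{b-2}\cdots T_1$ (identity for $b=1$). *)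

theory Defs
  imports Complex_Main
begin

text \<open>Rational functions in w_1, w_2, ... are represented as functions of the
  variable assignment w :: nat => complex (variables are 1-indexed).\<close>

definition swapv :: "nat \<Rightarrow> (nat \<Rightarrow> complex) \<Rightarrow> (nat \<Rightarrow> complex)" where
  "swapv i w = w(i := w (Suc i), Suc i := w i)"

definition Top :: "complex \<Rightarrow> nat \<Rightarrow> ((nat \<Rightarrow> complex) \<Rightarrow> complex) \<Rightarrow> ((nat \<Rightarrow> complex) \<Rightarrow> complex)" where
  "Top q i f = (\<lambda>w. q * f w + (w (Suc i) - q * w i) / (w (Suc i) - w i) * (f (swapv i w) - f w))"

text \<open>T_{sigma^-_[1,b]} = T_(b-1) ... T_1 (T_1 applied first); identity for b = 1.\<close>

definition Tsig :: "complex \<Rightarrow> nat \<Rightarrow> ((nat \<Rightarrow> complex) \<Rightarrow> complex) \<Rightarrow> ((nat \<Rightarrow> complex) \<Rightarrow> complex)" where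
  "Tsig q b f = fold (\<lambda>i g. Top q i g) [1..<b] f"

end

(* Write r(x) = (1 - q mu x)/(1 - mu x) and P_n = r(w_1) ... r(w_n). By induction on n,
   T_{sigma^-_[1,n+1]} maps the summand to P_{n+1} - P_n - lam q^n (1 - q)/(q - lam):
   T_n multiplies everything not involving w_n, w_(n+1) by q, and a two-variable computation
   gives T_n r(w_n) = q + r(w_n) r(w_(n+1)) - r(w_n), so P_n - P_(n-1) - c is carried to
   P_(n+1) - P_n - q c. Summing over n, the differences telescope to P_t - 1 and the constants
   form a geometric series which cancels the first term. *)

theory Submission
  imports Defs
begin

definition qfactor :: "complex \<Rightarrow> complex \<Rightarrow> complex \<Rightarrow> complex" where
  "qfactor Q mu x = (1 - Q * mu * x) / (1 - mu * x)"

definition qprod :: "complex \<Rightarrow> complex \<Rightarrow> nat \<Rightarrow> (nat \<Rightarrow> complex) \<Rightarrow> complex" where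
  "qprod Q mu n w = (\<Prod>i=1..n. qfactor Q mu (w i))"

definition seed :: "complex \<Rightarrow> complex \<Rightarrow> complex \<Rightarrow> (nat \<Rightarrow> complex) \<Rightarrow> complex" where
  "seed Q lam mu w = (Q - 1) * (lam - Q * mu * w 1) / ((Q - lam) * (1 - mu * w 1))"

definition admissible :: "complex \<Rightarrow> nat \<Rightarrow> (nat \<Rightarrow> complex) \<Rightarrow> bool" where
  "admissible mu n w \<longleftrightarrow> inj_on w {1..n} \<and> (\<forall>i\<in>{1..n}. mu * w i \<noteq> 1)"

lemma admissible_mono: "admissible mu n w \<Longrightarrow> m \<le> n \<Longrightarrow> admissible mu m w"
  unfolding admissible_def by (auto intro: inj_on_subset)

lemma admissible_swapv:
  assumes "admissible mu (Suc n) w"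
  shows "admissible mu n (swapv n w)"
proof -
  have swapv_on: "swapv n w i = (if i = n then w (Suc n) else w i)" if "i \<le> n" for i
    using that unfolding swapv_def by auto
  from assms show ?thesis
    unfolding admissible_def inj_on_def by (auto simp: swapv_on; force)
qed

lemma Tsig_1: "Tsig Q 1 f = f"
  unfolding Tsig_def by simp

lemma Tsig_Suc: "1 \<le> n \<Longrightarrow> Tsig Q (Suc n) f = Top Q n (Tsig Q n f)"
  unfolding Tsig_def by simp

lemma Top_cong:
  "f w = g w \<Longrightarrow> f (swapv i w) = g (swapv i w) \<Longrightarrow> Top Q i f w = Top Q i g w"
  unfolding Top_def by simp

lemma Top_affine:
  assumes "c (swapv i w) = c w" and "d (swapv i w) = d w"
  shows "Top Q i (\<lambda>v. c v * f v + d v) w = c w * Top Q i f w + Q * d w"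
  using assms unfolding Top_def by (simp add: algebra_simps)

lemma Top_qfactor:
  assumes "w i \<noteq> w (Suc i)" and "mu * w i \<noteq> 1" and "mu * w (Suc i) \<noteq> 1"
  shows "Top Q i (\<lambda>v. qfactor Q mu (v i)) w
    = Q + qfactor Q mu (w i) * qfactor Q mu (w (Suc i)) - qfactor Q mu (w i)"
proof -
  define a b where "a = w i" and "b = w (Suc i)"
  have "1 - mu * a \<noteq> 0" "1 - mu * b \<noteq> 0" "b - a \<noteq> 0"
    using assms by (auto simp: a_def b_def)
  then have "Q * qfactor Q mu a + (b - Q * a) / (b - a) * (qfactor Q mu b - qfactor Q mu a)
      = Q + qfactor Q mu a * qfactor Q mu b - qfactor Q mu a"
    unfolding qfactor_def by (simp add: divide_simps) algebra
  then show ?thesis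
    unfolding Top_def a_def b_def by (simp add: swapv_def)
qed

lemma qprod_0: "qprod Q mu 0 w = 1"
  unfolding qprod_def by simp

lemma qprod_Suc: "qprod Q mu (Suc n) w = qprod Q mu n w * qfactor Q mu (w (Suc n))"
  unfolding qprod_def by (simp add: prod.nat_ivl_Suc')

lemma qprod_swapv: "n < i \<Longrightarrow> qprod Q mu n (swapv i w) = qprod Q mu n w"
  unfolding qprod_def swapv_def by (rule prod.cong) auto

lemma Tsig_seed:
  assumes "Q \<noteq> lam" and "admissible mu (Suc n) w"
  shows "Tsig Q (Suc n) (seed Q lam mu) w
    = qprod Q mu (Suc n) w - qprod Q mu n w - lam * Q ^ n * (1 - Q) / (Q - lam)"
  using assms(2)
proof (induction n arbitrary: w)
  case 0
  then have "1 - mu * w 1 \<noteq> 0" and "Q - lam \<noteq> 0"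
    using assms(1) unfolding admissible_def by auto
  then show ?case
    using Tsig_1[of Q "seed Q lam mu"]
    unfolding seed_def qprod_def qfactor_def by (simp add: field_simps)
next
  case (Suc n)
  define K where "K = lam * Q ^ n * (1 - Q) / (Q - lam)"
  let ?r = "qfactor Q mu"
  have "admissible mu (Suc n) w" and "admissible mu (Suc n) (swapv (Suc n) w)"
    using Suc.prems by (auto intro: admissible_mono admissible_swapv)
  then have IH: "Tsig Q (Suc n) (seed Q lam mu) v
      = qprod Q mu n v * ?r (v (Suc n)) + (- qprod Q mu n v - K)"
    if "v \<in> {w, swapv (Suc n) w}" for v
    using that Suc.IH by (auto simp: K_def qprod_Suc)
  have distinct: "w (Suc n) \<noteq> w (Suc (Suc n))"
    and poles: "mu * w (Suc n) \<noteq> 1" "mu * w (Suc (Suc n)) \<noteq> 1"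
    using Suc.prems unfolding admissible_def by (auto simp: inj_on_eq_iff)
  have "Tsig Q (Suc (Suc n)) (seed Q lam mu) w
      = Top Q (Suc n) (Tsig Q (Suc n) (seed Q lam mu)) w"
    by (simp add: Tsig_Suc)
  also have "\<dots> = Top Q (Suc n) (\<lambda>v. qprod Q mu n v * ?r (v (Suc n)) + (- qprod Q mu n v - K)) w"
    by (rule Top_cong) (simp_all add: IH)
  also have "\<dots> = qprod Q mu n w * Top Q (Suc n) (\<lambda>v. ?r (v (Suc n))) w
      + Q * (- qprod Q mu n w - K)"
    by (rule Top_affine) (simp_all add: qprod_swapv)
  also have "\<dots> = qprod Q mu n w * (Q + ?r (w (Suc n)) * ?r (w (Suc (Suc n))) - ?r (w (Suc n)))
      + Q * (- qprod Q mu n w - K)"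
    using distinct poles by (simp add: Top_qfactor)
  also have "\<dots> = qprod Q mu (Suc (Suc n)) w - qprod Q mu (Suc n) w
      - lam * Q ^ Suc n * (1 - Q) / (Q - lam)"
    by (simp add: qprod_Suc K_def algebra_simps)
  finally show ?case .
qed

lemma seed_sum_eq_qprod:
  assumes "Q \<noteq> lam" and "admissible mu t w"
  shows "(Q - lam * Q ^ t) / (Q - lam) + (\<Sum>i<t. Tsig Q (i + 1) (seed Q lam mu) w)
    = qprod Q mu t w"
proof -
  have "Q - lam \<noteq> 0"
    using assms(1) by simp
  have "Tsig Q (i + 1) (seed Q lam mu) w
      = (qprod Q mu (Suc i) w - qprod Q mu i w) - lam * (1 - Q) / (Q - lam) * Q ^ i"
    if "i < t" for i
    using Tsig_seed[OF assms(1) admissible_mono[OF assms(2)]] that by simp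
  then have "(\<Sum>i<t. Tsig Q (i + 1) (seed Q lam mu) w)
      = (\<Sum>i<t. qprod Q mu (Suc i) w - qprod Q mu i w)
        - lam / (Q - lam) * ((1 - Q) * (\<Sum>i<t. Q ^ i))"
    by (simp add: sum_subtractf sum_distrib_left mult_ac)
  also have "\<dots> = qprod Q mu t w - 1 - lam / (Q - lam) * (1 - Q ^ t)"
    using sum_lessThan_telescope[of "\<lambda>i. qprod Q mu i w" t]
    by (simp add: one_diff_power_eq qprod_0)
  finally show ?thesis
    using \<open>Q - lam \<noteq> 0\<close> by (simp add: field_simps)
qed

theorem lemma6p2:
  fixes q :: real and lam mu :: complex and t :: nat and w :: "nat \<Rightarrow> complex"
  assumes "0 < q" and "q < 1" and "lam \<noteq> complex_of_real q"
    and "\<forall>i\<in>{1..t}. \<forall>j\<in>{1..t}. i \<noteq> j \<longrightarrow> w i \<noteq> w j"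
    and "\<forall>i\<in>{1..t}. mu * w i \<noteq> 1"
  shows "(complex_of_real q - lam * complex_of_real q ^ t) / (complex_of_real q - lam)
      + (\<Sum>i<t. Tsig (complex_of_real q) (i + 1)
            (\<lambda>v. (complex_of_real q - 1) * (lam - complex_of_real q * mu * v 1)
                 / ((complex_of_real q - lam) * (1 - mu * v 1))) w)
    = (\<Prod>i=1..t. (1 - complex_of_real q * mu * w i) / (1 - mu * w i))"
proof -
  \<comment> \<open>The identity holds for every complex q with q \<noteq> lam.\<close>
  have "admissible mu t w"
    using assms(4,5) unfolding admissible_def inj_on_def by blast
  with assms(3) show ?thesis
    using seed_sum_eq_qprod[of "complex_of_real q" lam mu t w]
    unfolding qprod_def qfactor_def seed_def by auto
qed

end
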